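(* Suppose that each of $k_0$ non-defective items and $k_1$ defective items is individually tested $\tilde t$ times (i.e., $\tilde t(k_0+k_1)$ tests in total), where each individual test of an item returns its defectivity status (1 if defective, 0 if not) flipped independently with probability $\rho \in (0,\frac12)$. For any fixed constant $\zeta \in (\rho,1-\rho)$ and any $\delta_0, \delta_1, \epsilon_1 \in (0,1)$, suppose that \[ \tilde t \ge \max\bigg\{ \frac{\log \frac{k_0}{\delta_0}}{ D_2(\zeta \| \rho) }, \frac{\log \frac{1}{\epsilon_1 \delta_1}}{ D_2(\zeta \| 1 - \rho) } \bigg\}. \] Then, if $k_0 = o(k_1)$, for sufficiently large $n$ it holds with probability at least $1-\delta_0-\delta_1$ that the $(1-\epsilon_1)k_1$ items that returned a positive outcome the highest number of times are all defective.
   Context: Logarithms are natural. $D_2(a\|b) = a\log\frac ab + (1-a)\log\frac{1-a}{1-b}$ is the binary relative entropy. The quantities $k_0, k_1$ (and possibly $\delta_0,\delta_1$) may depend on an underlying size parameter $n$, with asymptotics as $n\to\infty$. *)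

theory Defs
  imports "HOL-Probability.Probability" "HOL-Library.Landau_Symbols"
begin

definition D2 :: "real \<Rightarrow> real \<Rightarrow> real" where
  "D2 a b = a * ln (a / b) + (1 - a) * ln ((1 - a) / (1 - b))"

text \<open>Items: Inl i (i < k0) are the non-defective items, Inr j (j < k1) the defective ones.\<close>
definition items :: "nat \<Rightarrow> nat \<Rightarrow> (nat + nat) set" where
  "items k0 k1 = Inl ` {..<k0} \<union> Inr ` {..<k1}"

definition defective :: "nat + nat \<Rightarrow> bool" where
  "defective x = (case x of Inl _ \<Rightarrow> False | Inr _ \<Rightarrow> True)"

text \<open>Each individual test (x, s), s < t, is flipped independently with probability rho:
  omega (x, s) = True means the s-th test of item x was flipped.\<close>
definition flips_pmf :: "nat \<Rightarrow> nat \<Rightarrow> nat \<Rightarrow> real \<Rightarrow> ((nat + nat) \<times> nat \<Rightarrow> bool) pmf" where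
  "flips_pmf k0 k1 t \<rho> = Pi_pmf (items k0 k1 \<times> {..<t}) False (\<lambda>_. bernoulli_pmf \<rho>)"

definition outcome :: "((nat + nat) \<times> nat \<Rightarrow> bool) \<Rightarrow> nat + nat \<Rightarrow> nat \<Rightarrow> bool" where
  "outcome \<omega> x s = (defective x \<noteq> \<omega> (x, s))"

definition poscount :: "nat \<Rightarrow> ((nat + nat) \<times> nat \<Rightarrow> bool) \<Rightarrow> nat + nat \<Rightarrow> nat" where
  "poscount t \<omega> x = card {s \<in> {..<t}. outcome \<omega> x s}"

text \<open>S is a set of m items that returned a positive outcome the highest number of times
  (any admissible tie-breaking).\<close>
definition is_top_set :: "(nat + nat) set \<Rightarrow> (nat + nat \<Rightarrow> nat) \<Rightarrow> nat \<Rightarrow> (nat + nat) set \<Rightarrow> bool" where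
  "is_top_set I c m S \<longleftrightarrow> S \<subseteq> I \<and> card S = m \<and> (\<forall>x\<in>S. \<forall>y\<in>I - S. c y \<le> c x)"

end

theory Submission
  imports Defs
begin

text \<open>Call a non-defective item \<^emph>\<open>high\<close> if it is positive in at least \<open>\<zeta> t\<close> of its tests and a
  defective item \<^emph>\<open>low\<close> if it is positive in at most \<open>\<zeta> t\<close> of them. If no non-defective item
  is high and fewer than \<open>\<epsilon>\<^sub>1 k\<^sub>1\<close> defective items are low, then more than
  \<open>(1 - \<epsilon>\<^sub>1) k\<^sub>1\<close> defective items outrank every non-defective one, so any top set of
  size \<open>\<lfloor>(1 - \<epsilon>\<^sub>1) k\<^sub>1\<rfloor>\<close> consists of defective items. The number of flipped tests of an
  item is binomial, so the Chernoff bound \<open>exp (- t D\<^sub>2(a \<parallel> p))\<close> for its upper tail, a union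
  bound over the \<open>k\<^sub>0\<close> non-defective items and Markov's inequality for the number of low
  defective items bound the two failure probabilities by \<open>\<delta>\<^sub>0\<close> and \<open>\<delta>\<^sub>1\<close>. The bound holds
  for every \<open>n\<close>.\<close>

lemma D2_pos:
  fixes a b :: real
  assumes "0 < a" "a < 1" "0 < b" "b < 1" "a \<noteq> b"
  shows "0 < D2 a b"
proof -
  have "ln b - ln a < (b - a) / a" using assms by (intro ln_diff_less) auto
  then have "a - b < a * (ln a - ln b)" using assms by (simp add: field_simps)
  moreover have "ln (1 - b) - ln (1 - a) \<le> ((1 - b) - (1 - a)) / (1 - a)"
    using assms by (intro ln_diff_le) auto
  then have "b - a \<le> (1 - a) * (ln (1 - a) - ln (1 - b))" using assms by (simp add: field_simps)
  ultimately show ?thesis using assms by (simp add: D2_def ln_div)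
qed

lemma D2_one_minus: "D2 (1 - a) (1 - b) = D2 a b"
  unfolding D2_def by simp

lemma binomial_pmf_prob_ge_le_mgf:
  fixes p r a :: real
  assumes p: "0 \<le> p" "p \<le> 1" and r: "1 \<le> r"
  shows "measure_pmf.prob (binomial_pmf t p) {k. a * real t \<le> real k}
           \<le> (p * r + (1 - p)) ^ t / r powr (a * t)"
proof -
  let ?B = "binomial_pmf t p"
  have "measure_pmf.prob ?B {k. a * real t \<le> real k} = measure_pmf.prob ?B {k\<in>{..t}. a * real t \<le> real k}"
    using p by (intro measure_prob_cong_0) (auto simp: set_pmf_binomial_eq split: if_splits)
  also have "\<dots> = (\<Sum>k\<in>{k\<in>{..t}. a * real t \<le> real k}. pmf ?B k)"
    by (rule measure_measure_pmf_finite) auto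
  also have "\<dots> \<le> (\<Sum>k\<in>{k\<in>{..t}. a * real t \<le> real k}. pmf ?B k * (r ^ k / r powr (a * t)))"
  proof (rule sum_mono)
    fix k assume k: "k \<in> {k\<in>{..t}. a * real t \<le> real k}"
    have "r powr (a * t) \<le> r ^ k"
      using k r by (simp add: powr_realpow[symmetric] powr_mono)
    then show "pmf ?B k \<le> pmf ?B k * (r ^ k / r powr (a * t))"
      using r by (intro mult_le_cancel_left1[THEN iffD2]) auto
  qed
  also have "\<dots> \<le> (\<Sum>k\<le>t. pmf ?B k * (r ^ k / r powr (a * t)))"
    using r by (intro sum_mono2) auto
  also have "\<dots> = (\<Sum>k\<le>t. real (t choose k) * (p * r) ^ k * (1 - p) ^ (t - k)) / r powr (a * t)"
    using p by (simp add: sum_divide_distrib power_mult_distrib algebra_simps)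
  also have "\<dots> = (p * r + (1 - p)) ^ t / r powr (a * t)"
    by (simp add: binomial_ring)
  finally show ?thesis .
qed

text \<open>The choice of \<open>r\<close> below minimises the bound of \<open>binomial_pmf_prob_ge_le_mgf\<close>.\<close>

lemma Chernoff_optimum_eq_exp_D2:
  fixes p a :: real
  assumes "0 < p" "p < 1" "0 < a" "a < 1"
  defines "r \<equiv> a * (1 - p) / (p * (1 - a))"
  shows "(p * r + (1 - p)) ^ t / r powr (a * t) = exp (- real t * D2 a p)"
proof -
  have r: "0 < r" using assms by (simp add: r_def)
  have "p * r + (1 - p) = exp (ln (1 - p) - ln (1 - a))"
    using assms by (simp add: r_def exp_diff field_simps)
  then have "(p * r + (1 - p)) ^ t = exp (real t * (ln (1 - p) - ln (1 - a)))"
    by (simp add: exp_of_nat_mult)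
  moreover have "r powr (a * t) = exp (a * t * (ln a + ln (1 - p) - ln p - ln (1 - a)))"
    using assms r by (simp add: powr_def r_def ln_div ln_mult)
  moreover have "real t * (ln (1 - p) - ln (1 - a)) - a * t * (ln a + ln (1 - p) - ln p - ln (1 - a))
      = - real t * D2 a p"
    using assms by (simp add: D2_def ln_div algebra_simps)
  ultimately show ?thesis by (simp add: exp_diff[symmetric])
qed

lemma binomial_pmf_prob_ge_le_exp_D2:
  fixes p a :: real
  assumes "0 < p" "p \<le> a" "a < 1"
  shows "measure_pmf.prob (binomial_pmf t p) {k. a * real t \<le> real k} \<le> exp (- real t * D2 a p)"
proof -
  define r where "r = a * (1 - p) / (p * (1 - a))"
  have "1 \<le> r" using assms by (simp add: r_def field_simps mult_mono)
  then have "measure_pmf.prob (binomial_pmf t p) {k. a * real t \<le> real k}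
      \<le> (p * r + (1 - p)) ^ t / r powr (a * t)"
    using assms by (intro binomial_pmf_prob_ge_le_mgf) auto
  also have "\<dots> = exp (- real t * D2 a p)"
    using assms unfolding r_def by (intro Chernoff_optimum_eq_exp_D2) auto
  finally show ?thesis .
qed

lemma prob_card_events_ge_le:
  fixes M :: "'a pmf" and B :: "'b \<Rightarrow> 'a set"
  assumes "finite J" "0 < a"
  shows "measure_pmf.prob M {\<omega>. a \<le> real (card {j \<in> J. \<omega> \<in> B j})}
           \<le> (\<Sum>j\<in>J. measure_pmf.prob M (B j)) / a"
proof -
  have card_eq: "real (card {j \<in> J. \<omega> \<in> B j}) = (\<Sum>j\<in>J. indicator (B j) \<omega>)" for \<omega>
    using assms(1) by (simp add: indicator_def sum.If_cases Int_def)
  have "measure_pmf.prob M {\<omega>. a \<le> (\<Sum>j\<in>J. indicator (B j) \<omega>)}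
      \<le> (\<integral>\<omega>. (\<Sum>j\<in>J. indicator (B j) \<omega>) \<partial>M) / a"
    using integral_Markov_inequality_measure[of M "\<lambda>\<omega>. \<Sum>j\<in>J. indicator (B j) \<omega>" UNIV a] assms
    by (simp add: sum_nonneg less_top[symmetric])
  also have "(\<integral>\<omega>. (\<Sum>j\<in>J. indicator (B j) \<omega>) \<partial>M) = (\<Sum>j\<in>J. measure_pmf.prob M (B j))"
    by (simp add: Bochner_Integration.integral_sum less_top[symmetric])
  finally show ?thesis by (simp add: card_eq)
qed

lemma mult_exp_le_of_ln_div_le:
  fixes k \<delta> D t :: real
  assumes "0 < D" "0 < \<delta>" "0 \<le> k" "ln (k / \<delta>) / D \<le> t"
  shows "k * exp (- t * D) \<le> \<delta>"
proof (cases "k = 0")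
  case False
  have "exp (- t * D) \<le> exp (- ln (k / \<delta>))"
    using assms by (simp add: pos_divide_le_eq)
  also have "\<dots> = \<delta> / k" using assms False by (simp add: exp_minus)
  finally show ?thesis using assms False by (simp add: field_simps)
qed (use assms in simp)

definition flip_count :: "nat \<Rightarrow> ((nat + nat) \<times> nat \<Rightarrow> bool) \<Rightarrow> nat + nat \<Rightarrow> nat" where
  "flip_count t \<omega> x = card {s \<in> {..<t}. \<omega> (x, s)}"

lemma finite_items: "finite (items k0 k1)"
  unfolding items_def by auto

lemma flip_count_le: "flip_count t \<omega> x \<le> t"
  unfolding flip_count_def by (rule order.trans[OF card_mono[of "{..<t}"]]) auto

lemma poscount_eq_flip_count:
  "poscount t \<omega> x = (if defective x then t - flip_count t \<omega> x else flip_count t \<omega> x)"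
proof -
  have "card {s \<in> {..<t}. \<not> \<omega> (x, s)} = card ({..<t} - {s \<in> {..<t}. \<omega> (x, s)})"
    by (rule arg_cong[where f = card]) auto
  also have "\<dots> = t - flip_count t \<omega> x"
    unfolding flip_count_def by (subst card_Diff_subset) auto
  finally show ?thesis by (simp add: poscount_def outcome_def flip_count_def)
qed

lemma flip_count_distribution:
  assumes x: "x \<in> items k0 k1" and p: "0 \<le> p" "p \<le> 1"
  shows "map_pmf (\<lambda>\<omega>. flip_count t \<omega> x) (flips_pmf k0 k1 t p) = binomial_pmf t p"
proof -
  define A where "A = {x} \<times> {..<t}"
  have A: "finite A" "card A = t" "A \<subseteq> items k0 k1 \<times> {..<t}"
    using x by (auto simp: A_def card_cartesian_product)
  have count_A: "card {y \<in> A. \<omega> y} = flip_count t \<omega> x" for \<omega> :: "(nat + nat) \<times> nat \<Rightarrow> bool"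
  proof -
    have "{y \<in> A. \<omega> y} = Pair x ` {s \<in> {..<t}. \<omega> (x, s)}" by (auto simp: A_def)
    then show ?thesis by (simp add: flip_count_def card_image inj_on_def)
  qed
  have "binomial_pmf t p = map_pmf (\<lambda>f. card {y \<in> A. f y}) (Pi_pmf A False (\<lambda>_. bernoulli_pmf p))"
    using A p by (intro binomial_pmf_altdef') auto
  also have "Pi_pmf A False (\<lambda>_. bernoulli_pmf p) =
      map_pmf (\<lambda>f y. if y \<in> A then f y else False) (flips_pmf k0 k1 t p)"
    unfolding flips_pmf_def using A finite_items by (intro Pi_pmf_subset) auto
  finally show ?thesis
    by (simp add: pmf.map_comp o_def count_A[symmetric] cong: conj_cong)
qed

lemma prob_flip_count_ge:
  assumes "x \<in> items k0 k1" "0 < p" "p \<le> a" "a < 1"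
  shows "measure_pmf.prob (flips_pmf k0 k1 t p) {\<omega>. a * real t \<le> real (flip_count t \<omega> x)}
           \<le> exp (- real t * D2 a p)"
proof -
  have "measure_pmf.prob (flips_pmf k0 k1 t p) {\<omega>. a * real t \<le> real (flip_count t \<omega> x)}
      = measure_pmf.prob (map_pmf (\<lambda>\<omega>. flip_count t \<omega> x) (flips_pmf k0 k1 t p))
          {k. a * real t \<le> real k}"
    by (simp add: measure_map_pmf vimage_def)
  also have "\<dots> = measure_pmf.prob (binomial_pmf t p) {k. a * real t \<le> real k}"
    using assms by (simp add: flip_count_distribution)
  also have "\<dots> \<le> exp (- real t * D2 a p)"
    using assms by (intro binomial_pmf_prob_ge_le_exp_D2) auto
  finally show ?thesis .
qed

lemma prob_nondefective_poscount_ge: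
  assumes "x \<in> items k0 k1" "\<not> defective x" "0 < p" "p \<le> z" "z < 1"
  shows "measure_pmf.prob (flips_pmf k0 k1 t p) {\<omega>. z * real t \<le> real (poscount t \<omega> x)}
           \<le> exp (- real t * D2 z p)"
  using assms prob_flip_count_ge[of x k0 k1 p z t] by (simp add: poscount_eq_flip_count)

lemma prob_defective_poscount_le:
  assumes "x \<in> items k0 k1" "defective x" "0 < p" "p \<le> 1 - z" "0 < z"
  shows "measure_pmf.prob (flips_pmf k0 k1 t p) {\<omega>. real (poscount t \<omega> x) \<le> z * real t}
           \<le> exp (- real t * D2 z (1 - p))"
proof -
  have "real (poscount t \<omega> x) \<le> z * real t \<longleftrightarrow> (1 - z) * real t \<le> real (flip_count t \<omega> x)" for \<omega>
    using assms(2) flip_count_le[of t \<omega> x]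
    by (simp add: poscount_eq_flip_count of_nat_diff algebra_simps)
  then show ?thesis
    using assms prob_flip_count_ge[of x k0 k1 p "1 - z" t] D2_one_minus[of z "1 - p"] by simp
qed

lemma is_top_set_all_defective:
  assumes top: "is_top_set I c m S" and "finite I"
    and nondefective_low: "\<forall>x\<in>I. \<not> defective x \<longrightarrow> real (c x) \<le> \<theta>"
    and many_defective_high: "m \<le> card {y \<in> I. defective y \<and> \<theta> < real (c y)}"
  shows "\<forall>x\<in>S. defective x"
proof (rule ccontr)
  assume "\<not> (\<forall>x\<in>S. defective x)"
  then obtain x where x: "x \<in> S" "\<not> defective x" by blast
  have S: "S \<subseteq> I" "card S = m" "\<forall>x\<in>S. \<forall>y\<in>I - S. c y \<le> c x"
    using top by (auto simp: is_top_set_def)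
  let ?G = "{y \<in> I. defective y \<and> \<theta> < real (c y)}"
  have "?G \<subseteq> S"
  proof
    fix y assume y: "y \<in> ?G"
    have "real (c x) \<le> \<theta>" using x S(1) nondefective_low by auto
    with y have "c x < c y" by auto
    with y S(3) x(1) show "y \<in> S" by (metis (mono_tags, lifting) DiffI mem_Collect_eq not_le)
  qed
  moreover have "x \<notin> ?G" using x by auto
  ultimately have "insert x ?G \<subseteq> S" using x by auto
  then have "card (insert x ?G) \<le> m"
    using S \<open>finite I\<close> by (metis card_mono finite_subset)
  with \<open>x \<notin> ?G\<close> \<open>finite I\<close> many_defective_high show False by simp
qed

lemma defective_items_eq: "{y \<in> items k0 k1. defective y \<and> P y} = Inr ` {j \<in> {..<k1}. P (Inr j)}"
  by (auto simp: items_def defective_def)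

lemma is_top_set_items_all_defective:
  assumes top: "is_top_set (items k0 k1) c (nat \<lfloor>(1 - \<epsilon>) * real k1\<rfloor>) S"
    and nondefective_low: "\<forall>i<k0. real (c (Inl i)) < \<theta>"
    and few_defective_low: "real (card {j \<in> {..<k1}. real (c (Inr j)) \<le> \<theta>}) < \<epsilon> * real k1"
  shows "\<forall>x\<in>S. defective x"
proof (rule is_top_set_all_defective[OF top finite_items])
  show "\<forall>x\<in>items k0 k1. \<not> defective x \<longrightarrow> real (c x) \<le> \<theta>"
    using nondefective_low by (auto simp: items_def defective_def less_imp_le)
  let ?L = "{j \<in> {..<k1}. real (c (Inr j)) \<le> \<theta>}"
  have "card ({..<k1} - ?L) = k1 - card ?L" by (subst card_Diff_subset) auto
  moreover have "card ?L \<le> k1" by (rule order.trans[OF card_mono[of "{..<k1}"]]) auto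
  ultimately have "(1 - \<epsilon>) * real k1 < real (card ({..<k1} - ?L))"
    using few_defective_low by (simp add: of_nat_diff algebra_simps)
  moreover have "{y \<in> items k0 k1. defective y \<and> \<theta> < real (c y)} = Inr ` ({..<k1} - ?L)"
    by (auto simp: defective_items_eq)
  ultimately show "nat \<lfloor>(1 - \<epsilon>) * real k1\<rfloor> \<le> card {y \<in> items k0 k1. defective y \<and> \<theta> < real (c y)}"
    by (simp add: card_image nat_le_iff floor_le_iff)
qed

lemma prob_some_nondefective_high_le:
  assumes "0 < p" "p \<le> z" "z < 1"
  shows "measure_pmf.prob (flips_pmf k0 k1 t p) {\<omega>. \<exists>i<k0. z * real t \<le> real (poscount t \<omega> (Inl i))}
           \<le> real k0 * exp (- real t * D2 z p)"
proof -
  let ?M = "flips_pmf k0 k1 t p"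
  have "{\<omega>. \<exists>i<k0. z * real t \<le> real (poscount t \<omega> (Inl i))}
      = (\<Union>i<k0. {\<omega>. z * real t \<le> real (poscount t \<omega> (Inl i))})"
    by auto
  then have "measure_pmf.prob ?M {\<omega>. \<exists>i<k0. z * real t \<le> real (poscount t \<omega> (Inl i))}
      \<le> (\<Sum>i<k0. measure_pmf.prob ?M {\<omega>. z * real t \<le> real (poscount t \<omega> (Inl i))})"
    by (simp only:) (rule measure_pmf.finite_measure_subadditive_finite; auto)
  also have "\<dots> \<le> (\<Sum>i<k0. exp (- real t * D2 z p))"
    using assms by (intro sum_mono prob_nondefective_poscount_ge) (auto simp: items_def defective_def)
  finally show ?thesis by simp
qed

lemma prob_many_defective_low_le:
  assumes "0 < p" "p \<le> 1 - z" "0 < z" "0 < \<epsilon>" "0 < k1"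
  shows "measure_pmf.prob (flips_pmf k0 k1 t p)
           {\<omega>. \<epsilon> * real k1 \<le> real (card {j \<in> {..<k1}. real (poscount t \<omega> (Inr j)) \<le> z * real t})}
         \<le> exp (- real t * D2 z (1 - p)) / \<epsilon>"
proof -
  let ?M = "flips_pmf k0 k1 t p"
  let ?low = "\<lambda>j. {\<omega>. real (poscount t \<omega> (Inr j)) \<le> z * real t}"
  have "measure_pmf.prob ?M {\<omega>. \<epsilon> * real k1 \<le> real (card {j \<in> {..<k1}. \<omega> \<in> ?low j})}
      \<le> (\<Sum>j<k1. measure_pmf.prob ?M (?low j)) / (\<epsilon> * real k1)"
    using assms by (intro prob_card_events_ge_le) auto
  also have "\<dots> \<le> (\<Sum>j<k1. exp (- real t * D2 z (1 - p))) / (\<epsilon> * real k1)"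
    using assms by (intro divide_right_mono sum_mono prob_defective_poscount_le)
      (auto simp: items_def defective_def)
  also have "\<dots> = exp (- real t * D2 z (1 - p)) / \<epsilon>"
    using assms by simp
  finally show ?thesis by simp
qed

lemma prob_top_set_all_defective_ge:
  fixes k0 k1 t :: nat and \<delta>0 \<delta>1 \<rho> \<zeta> \<epsilon>1 :: real
  assumes rho: "0 < \<rho>" "\<rho> < 1/2" and zeta: "\<rho> < \<zeta>" "\<zeta> < 1 - \<rho>"
    and pos: "0 < \<delta>0" "0 < \<delta>1" "0 < \<epsilon>1"
    and t_ge0: "ln (real k0 / \<delta>0) / D2 \<zeta> \<rho> \<le> real t"
    and t_ge1: "ln (1 / (\<epsilon>1 * \<delta>1)) / D2 \<zeta> (1 - \<rho>) \<le> real t"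
  shows "measure_pmf.prob (flips_pmf k0 k1 t \<rho>)
           {\<omega>. \<forall>S. is_top_set (items k0 k1) (poscount t \<omega>) (nat \<lfloor>(1 - \<epsilon>1) * real k1\<rfloor>) S
                  \<longrightarrow> (\<forall>x\<in>S. defective x)}
         \<ge> 1 - \<delta>0 - \<delta>1"
    (is "measure_pmf.prob ?M ?Good \<ge> _")
proof (cases "k1 = 0")
  case True
  have "?Good = UNIV"
    using finite_items[of k0 k1] by (auto simp: True is_top_set_def finite_subset)
  then show ?thesis using pos by simp
next
  case False
  define E0 where "E0 = {\<omega>. \<exists>i<k0. \<zeta> * real t \<le> real (poscount t \<omega> (Inl i))}"
  define E1 where "E1 = {\<omega>. \<epsilon>1 * real k1
    \<le> real (card {j \<in> {..<k1}. real (poscount t \<omega> (Inr j)) \<le> \<zeta> * real t})}"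
  have "- (E0 \<union> E1) \<subseteq> ?Good"
  proof (intro subsetI CollectI allI impI)
    fix \<omega> S
    assume "\<omega> \<in> - (E0 \<union> E1)"
      and "is_top_set (items k0 k1) (poscount t \<omega>) (nat \<lfloor>(1 - \<epsilon>1) * real k1\<rfloor>) S"
    then show "\<forall>x\<in>S. defective x"
      by (intro is_top_set_items_all_defective[where \<theta> = "\<zeta> * real t"])
        (auto simp: E0_def E1_def not_le)
  qed
  then have "1 - measure_pmf.prob ?M (E0 \<union> E1) \<le> measure_pmf.prob ?M ?Good"
    using measure_pmf.finite_measure_mono[of "- (E0 \<union> E1)" ?Good ?M]
    by (simp add: measure_pmf.prob_compl[symmetric] Compl_eq_Diff_UNIV)
  moreover have "measure_pmf.prob ?M (E0 \<union> E1) \<le> measure_pmf.prob ?M E0 + measure_pmf.prob ?M E1"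
    by (rule measure_subadditive) (auto simp: measure_pmf.emeasure_finite)
  moreover have "measure_pmf.prob ?M E0 \<le> \<delta>0"
    using prob_some_nondefective_high_le[of \<rho> \<zeta> k0 k1 t]
      mult_exp_le_of_ln_div_le[of "D2 \<zeta> \<rho>" \<delta>0 "real k0" "real t"] rho zeta pos t_ge0
    by (simp add: E0_def D2_pos)
  moreover have "measure_pmf.prob ?M E1 \<le> \<delta>1"
  proof -
    have "measure_pmf.prob ?M E1 \<le> exp (- real t * D2 \<zeta> (1 - \<rho>)) / \<epsilon>1"
      unfolding E1_def using rho zeta pos False by (intro prob_many_defective_low_le) auto
    also have "\<dots> \<le> \<delta>1"
      using mult_exp_le_of_ln_div_le[of "D2 \<zeta> (1 - \<rho>)" "\<epsilon>1 * \<delta>1" 1 "real t"] rho zeta pos t_ge1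
      by (simp add: D2_pos pos_divide_le_eq mult.commute)
    finally show ?thesis .
  qed
  ultimately show ?thesis by linarith
qed

theorem lemma5:
  fixes k0 k1 t :: "nat \<Rightarrow> nat"
    and \<delta>0 \<delta>1 :: "nat \<Rightarrow> real"
    and \<rho> \<zeta> \<epsilon>1 :: real
  assumes rho: "0 < \<rho>" "\<rho> < 1/2"
    and zeta: "\<rho> < \<zeta>" "\<zeta> < 1 - \<rho>"
    and delta: "\<And>n. 0 < \<delta>0 n \<and> \<delta>0 n < 1" "\<And>n. 0 < \<delta>1 n \<and> \<delta>1 n < 1"
    and eps: "0 < \<epsilon>1" "\<epsilon>1 < 1"
    and t_ge: "\<And>n. real (t n) \<ge> max (ln (real (k0 n) / \<delta>0 n) / D2 \<zeta> \<rho>)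
                                     (ln (1 / (\<epsilon>1 * \<delta>1 n)) / D2 \<zeta> (1 - \<rho>))"
    and small: "(\<lambda>n. real (k0 n)) \<in> o(\<lambda>n. real (k1 n))"
  shows "\<forall>\<^sub>F n in at_top.
           measure_pmf.prob (flips_pmf (k0 n) (k1 n) (t n) \<rho>)
             {\<omega>. \<forall>S. is_top_set (items (k0 n) (k1 n)) (poscount (t n) \<omega>)
                          (nat \<lfloor>(1 - \<epsilon>1) * real (k1 n)\<rfloor>) S
                       \<longrightarrow> (\<forall>x\<in>S. defective x)}
           \<ge> 1 - \<delta>0 n - \<delta>1 n"
  using rho zeta delta eps t_ge
  by (intro always_eventually allI prob_top_set_all_defective_ge) auto

end
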